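(* Let $\varepsilon>0$ and let $B$ be the closed unit ball of $C(0,1)$ (sup norm). There exists a non-negative, $1$-Lipschitz, $\varepsilon$-convex function $f:B\to\mathbb{R}$ such that for every convex function $g:B\to\mathbb{R}$, $$\sup\{|f(x)-g(x)|:x\in B\}\ge1 .$$
   Context: $C(0,1)$ is the space of continuous real functions on $[0,1]$ with the supremum norm. A function $f$ on a convex set $C$ is $\varepsilon$-convex if $f(tx+(1-t)y)\le tf(x)+(1-t)f(y)+\varepsilon$ for all $x,y\in C$, $t\in[0,1]$. *)

theory Defs
  imports "HOL-Analysis.Analysis"
begin

text \<open>C(0,1) is represented by real functions continuous on [0,1] and
  normalised to vanish outside [0,1] (so each element of C(0,1) has exactly
  one representative; vector operations are pointwise).\<close>

definition C01 :: "(real \<Rightarrow> real) set" where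
  "C01 = {x. continuous_on {0..1} x \<and> (\<forall>s. s \<notin> {0..1} \<longrightarrow> x s = 0)}"

definition supnorm :: "(real \<Rightarrow> real) \<Rightarrow> real" where
  "supnorm x = (SUP s\<in>{0..1}. \<bar>x s\<bar>)"

definition unit_ball_C01 :: "(real \<Rightarrow> real) set" where
  "unit_ball_C01 = {x \<in> C01. supnorm x \<le> 1}"

definition lipschitz_C01 :: "(real \<Rightarrow> real) set \<Rightarrow> real \<Rightarrow> ((real \<Rightarrow> real) \<Rightarrow> real) \<Rightarrow> bool" where
  "lipschitz_C01 S L f \<longleftrightarrow>
     (\<forall>x\<in>S. \<forall>y\<in>S. \<bar>f x - f y\<bar> \<le> L * supnorm (\<lambda>s. x s - y s))"

definition eps_convex_C01 :: "(real \<Rightarrow> real) set \<Rightarrow> real \<Rightarrow> ((real \<Rightarrow> real) \<Rightarrow> real) \<Rightarrow> bool" where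
  "eps_convex_C01 S \<epsilon> f \<longleftrightarrow>
     (\<forall>x\<in>S. \<forall>y\<in>S. \<forall>t\<in>{0..1::real}.
        f (\<lambda>s. t * x s + (1 - t) * y s) \<le> t * f x + (1 - t) * f y + \<epsilon>)"

definition convex_C01 :: "(real \<Rightarrow> real) set \<Rightarrow> ((real \<Rightarrow> real) \<Rightarrow> real) \<Rightarrow> bool" where
  "convex_C01 S f \<longleftrightarrow>
     (\<forall>x\<in>S. \<forall>y\<in>S. \<forall>t\<in>{0..1::real}.
        f (\<lambda>s. t * x s + (1 - t) * y s) \<le> t * f x + (1 - t) * f y)"

end

theory Submission
  imports Defs
begin

text \<open>Split \<open>(0,1)\<close> into disjoint open slots; slot \<open>n\<close> carries \<open>2^n\<close> nodes, indexed by the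
  subsets \<open>A\<close> of \<open>{..<n}\<close>. On slot \<open>n\<close> the \<open>n\<close> vertices \<open>v\<^sub>i\<close> take the value \<open>1\<close> at node \<open>A\<close> if
  \<open>i \<in> A\<close> and \<open>-1\<close> otherwise, like Rademacher vectors, and they equal \<open>1\<close> at the nodes of all other slots.
  Let \<open>\<phi>\<^sub>n x\<close> be the infimum, over probability vectors \<open>\<lambda>\<close> on \<open>{..n}\<close>, of \<open>\<epsilon> H(\<lambda>)\<close> plus the
  largest deviation of \<open>x\<close> at the nodes of slot \<open>n\<close> from \<open>\<Sum>\<^sub>i<\<^sub>n \<lambda>\<^sub>i v\<^sub>i + \<lambda>\<^sub>n\<close>. The entropy \<open>H\<close> is
  concave up to an additive error \<open>1\<close>, so \<open>\<phi>\<^sub>n\<close> and \<open>F = sup\<^sub>n \<phi>\<^sub>n\<close> are \<open>1\<close>-Lipschitz and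
  \<open>\<epsilon>\<close>-convex. \<open>F\<close> vanishes at every vertex, whereas at the barycentre \<open>b\<close> of \<open>v\<^sub>0, \<dots>, v\<^sub>n\<^sub>-\<^sub>1\<close>
  any \<open>\<lambda>\<close> either has high entropy or is far from uniform, which gives
  \<open>F b \<ge> 2 - 2 e\<^bsup>2/\<epsilon>\<^esup>/n\<close>. A convex \<open>g\<close> has \<open>g b\<close> at most the mean of the \<open>g v\<^sub>i\<close>, so it misses
  \<open>F\<close> by almost \<open>1\<close> either at \<open>b\<close> or at some vertex.\<close>

section \<open>The unit ball of C(0,1)\<close>

lemma bdd_above_abs_C01:
  assumes "x \<in> C01"
  shows "bdd_above ((\<lambda>s. \<bar>x s\<bar>) ` {0..1})"
proof -
  have "continuous_on {0..1} (\<lambda>s. \<bar>x s\<bar>)"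
    using assms unfolding C01_def by (auto intro: continuous_intros)
  then have "compact ((\<lambda>s. \<bar>x s\<bar>) ` {0..1::real})"
    by (intro compact_continuous_image) auto
  then show ?thesis by (intro bounded_imp_bdd_above compact_imp_bounded)
qed

lemma abs_le_supnorm:
  assumes "x \<in> C01" "s \<in> {0..1}"
  shows "\<bar>x s\<bar> \<le> supnorm x"
  unfolding supnorm_def using assms bdd_above_abs_C01 by (intro cSUP_upper) auto

lemma supnorm_le:
  assumes "\<And>s. s \<in> {0..1} \<Longrightarrow> \<bar>x s\<bar> \<le> c"
  shows "supnorm x \<le> c"
  unfolding supnorm_def using assms by (intro cSUP_least) auto

lemma supnorm_diff_commute: "supnorm (\<lambda>s. y s - x s) = supnorm (\<lambda>s. x s - y s)"
  unfolding supnorm_def by (simp add: abs_minus_commute)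

lemma abs_diff_le_supnorm:
  assumes "x \<in> C01" "y \<in> C01" "s \<in> {0..1}"
  shows "\<bar>x s - y s\<bar> \<le> supnorm (\<lambda>s. x s - y s)"
proof -
  have "(\<lambda>s. x s - y s) \<in> C01"
    using assms unfolding C01_def by (auto intro: continuous_intros)
  then show ?thesis using abs_le_supnorm assms(3) by blast
qed

lemma abs_le_1_if_unit_ball_C01:
  assumes "x \<in> unit_ball_C01" "s \<in> {0..1}"
  shows "\<bar>x s\<bar> \<le> 1"
  using assms abs_le_supnorm unfolding unit_ball_C01_def by force

lemma convex_comb_in_unit_ball_C01:
  assumes "x \<in> unit_ball_C01" "y \<in> unit_ball_C01" "t \<in> {0..1}"
  shows "(\<lambda>s. t * x s + (1 - t) * y s) \<in> unit_ball_C01"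
proof -
  have "(\<lambda>s. t * x s + (1 - t) * y s) \<in> C01"
    using assms unfolding unit_ball_C01_def C01_def by (auto intro!: continuous_intros)
  moreover have "\<bar>t * x s + (1 - t) * y s\<bar> \<le> 1" if "s \<in> {0..1}" for s
  proof -
    have "\<bar>x s\<bar> \<le> 1" "\<bar>y s\<bar> \<le> 1" using abs_le_1_if_unit_ball_C01 assms that by auto
    then have "\<bar>t * x s\<bar> \<le> t" "\<bar>(1 - t) * y s\<bar> \<le> 1 - t"
      using assms(3) by (auto simp: abs_mult intro: mult_left_le)
    then show ?thesis by linarith
  qed
  ultimately show ?thesis using supnorm_le unfolding unit_ball_C01_def by auto
qed

lemma unit_ball_C01_extension:
  assumes "closed S" "continuous_on S f" "\<And>s. s \<in> S \<Longrightarrow> \<bar>f s\<bar> \<le> 1"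
  obtains v where "v \<in> unit_ball_C01" "\<And>s. s \<in> S \<inter> {0..1} \<Longrightarrow> v s = f s"
proof -
  obtain g :: "real \<Rightarrow> real" where g: "continuous_on UNIV g" "\<And>s. s \<in> S \<Longrightarrow> g s = f s"
    "\<And>s. \<bar>g s\<bar> \<le> 1"
    using Tietze[of S f UNIV 1] assms by auto
  define v where "v = (\<lambda>s. if s \<in> {0..1} then g s else 0)"
  have "continuous_on {0..1} v"
    using continuous_on_subset[OF g(1)] by (rule continuous_on_eq) (auto simp: v_def)
  then have "v \<in> C01" unfolding C01_def v_def by auto
  moreover have "supnorm v \<le> 1" using g(3) by (intro supnorm_le) (auto simp: v_def)
  ultimately show ?thesis using that g(2) unfolding unit_ball_C01_def v_def by auto
qed

lemma convex_C01_mean_le: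
  assumes g: "convex_C01 S g"
    and S: "\<And>x y t. x \<in> S \<Longrightarrow> y \<in> S \<Longrightarrow> t \<in> {0..1} \<Longrightarrow> (\<lambda>s. t * x s + (1 - t) * y s) \<in> S"
    and "k \<ge> 1" "\<And>i. i < k \<Longrightarrow> u i \<in> S"
  shows "(\<lambda>s. (\<Sum>i<k. u i s) / real k) \<in> S \<and> g (\<lambda>s. (\<Sum>i<k. u i s) / real k) \<le> (\<Sum>i<k. g (u i)) / real k"
  using assms(3,4)
proof (induction k)
  case (Suc k)
  show ?case
  proof (cases "k = 0")
    case True
    then show ?thesis using Suc.prems by simp
  next
    case False
    define a where "a = (\<lambda>s. (\<Sum>i<k. u i s) / real k)"
    define t where "t = real k / real (Suc k)"
    have IH: "a \<in> S" "g a \<le> (\<Sum>i<k. g (u i)) / real k"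
      using Suc False unfolding a_def by auto
    have t: "t \<in> {0..1}" and t1: "1 - t = 1 / real (Suc k)"
      unfolding t_def by (auto simp: field_simps)
    have uk: "u k \<in> S" using Suc.prems by auto
    have mean: "(\<lambda>s. (\<Sum>i<Suc k. u i s) / real (Suc k)) = (\<lambda>s. t * a s + (1 - t) * u k s)"
      using False unfolding t1 by (auto simp: t_def a_def add_divide_distrib)
    have "g (\<lambda>s. t * a s + (1 - t) * u k s) \<le> t * g a + (1 - t) * g (u k)"
      using g IH(1) uk t unfolding convex_C01_def by auto
    also have "\<dots> \<le> t * ((\<Sum>i<k. g (u i)) / real k) + (1 - t) * g (u k)"
      using IH(2) t by (intro add_mono mult_left_mono) auto
    also have "\<dots> = (\<Sum>i<Suc k. g (u i)) / real (Suc k)"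
      using False unfolding t1 by (simp add: t_def add_divide_distrib)
    finally show ?thesis using mean S[OF IH(1) uk t] by simp
  qed
qed simp

section \<open>Entropy of probability vectors\<close>

lemma neg_mult_ln_nonneg:
  fixes a :: real
  assumes "0 \<le> a" "a \<le> 1"
  shows "0 \<le> - (a * ln a)"
  using assms by (cases "a = 0") (auto simp: mult_nonneg_nonpos)

lemma neg_mult_ln_le_one_minus:
  fixes t :: real
  assumes "0 \<le> t"
  shows "- (t * ln t) \<le> 1 - t"
proof (cases "t = 0")
  case False
  then have "0 < t" using assms by simp
  then have "- ln t \<le> 1 / t - 1" using ln_le_minus_one[of "1 / t"] by (simp add: ln_div)
  then have "t * (- ln t) \<le> t * (1 / t - 1)" using assms by (rule mult_left_mono)
  also have "t * (1 / t - 1) = 1 - t" using \<open>0 < t\<close> by (simp add: field_simps)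
  finally show ?thesis by simp
qed simp

lemma neg_mult_ln_part_le:
  fixes a t c :: real
  assumes "0 \<le> a" "0 \<le> t" "t * a \<le> c"
  shows "- (t * a * ln c) \<le> t * (- (a * ln a)) + (1 - t) * a"
proof (cases "t = 0 \<or> a = 0")
  case False
  then have "0 < t" "0 < a" using assms by auto
  then have "ln (t * a) \<le> ln c"
    using assms(3) by (subst ln_le_cancel_iff) (auto intro: order.strict_trans2[OF mult_pos_pos])
  then have "ln t + ln a \<le> ln c" using \<open>0 < t\<close> \<open>0 < a\<close> by (simp add: ln_mult)
  then have "- (t * a * ln c) \<le> t * (- (a * ln a)) + a * (- (t * ln t))"
    using mult_left_mono[of _ _ "t * a"] \<open>0 < t\<close> \<open>0 < a\<close> by (fastforce simp: algebra_simps)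
  also have "\<dots> \<le> t * (- (a * ln a)) + a * (1 - t)"
    using mult_left_mono[OF neg_mult_ln_le_one_minus[OF assms(2)] assms(1)] by simp
  finally show ?thesis by (simp add: algebra_simps)
qed (use assms in auto)

text \<open>Split \<open>-c ln c\<close>, \<open>c = t a + (1 - t) b\<close>, into its two parts and compare each with \<open>ln\<close> of
  the corresponding summand.\<close>

lemma neg_mult_ln_convex_comb_le:
  fixes a b t :: real
  assumes "0 \<le> a" "0 \<le> b" "t \<in> {0..1}"
  shows "- ((t * a + (1 - t) * b) * ln (t * a + (1 - t) * b))
     \<le> t * (- (a * ln a)) + (1 - t) * (- (b * ln b)) + ((1 - t) * a + t * b)"
proof -
  define c where "c = t * a + (1 - t) * b"
  have "- (t * a * ln c) \<le> t * (- (a * ln a)) + (1 - t) * a"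
    using assms by (intro neg_mult_ln_part_le) (auto simp: c_def)
  moreover have "- ((1 - t) * b * ln c) \<le> (1 - t) * (- (b * ln b)) + (1 - (1 - t)) * b"
    using assms by (intro neg_mult_ln_part_le) (auto simp: c_def)
  moreover have "- (c * ln c) = - (t * a * ln c) - ((1 - t) * b * ln c)"
    by (simp add: c_def algebra_simps)
  ultimately show ?thesis unfolding c_def[symmetric] by simp
qed

definition prob_simplex :: "'a set \<Rightarrow> ('a \<Rightarrow> real) set" where
  "prob_simplex I = {l. (\<forall>i\<in>I. 0 \<le> l i) \<and> sum l I = 1}"

definition shannon_entropy :: "'a set \<Rightarrow> ('a \<Rightarrow> real) \<Rightarrow> real" where
  "shannon_entropy I l = (\<Sum>i\<in>I. - (l i * ln (l i)))"

lemma prob_simplex_le_1: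
  assumes "finite I" "l \<in> prob_simplex I" "i \<in> I"
  shows "l i \<le> 1"
  using assms member_le_sum[of i I l] unfolding prob_simplex_def by auto

lemma shannon_entropy_nonneg:
  assumes "finite I" "l \<in> prob_simplex I"
  shows "0 \<le> shannon_entropy I l"
  using assms prob_simplex_le_1[OF assms] unfolding shannon_entropy_def
  by (intro sum_nonneg neg_mult_ln_nonneg) (auto simp: prob_simplex_def)

lemma indicator_in_prob_simplex:
  assumes "finite I" "j \<in> I"
  shows "(\<lambda>i. if i = j then 1 else 0) \<in> prob_simplex I"
  using assms unfolding prob_simplex_def by auto

lemma shannon_entropy_indicator: "shannon_entropy I (\<lambda>i. if i = j then 1 else 0) = 0"
  unfolding shannon_entropy_def by (intro sum.neutral) auto

lemma convex_comb_in_prob_simplex: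
  assumes "l \<in> prob_simplex I" "m \<in> prob_simplex I" "t \<in> {0..1}"
  shows "(\<lambda>i. t * l i + (1 - t) * m i) \<in> prob_simplex I"
  using assms unfolding prob_simplex_def by (auto simp: sum.distrib simp flip: sum_distrib_left)

lemma shannon_entropy_convex_comb_le:
  assumes "l \<in> prob_simplex I" "m \<in> prob_simplex I" "t \<in> {0..1}"
  shows "shannon_entropy I (\<lambda>i. t * l i + (1 - t) * m i)
    \<le> t * shannon_entropy I l + (1 - t) * shannon_entropy I m + 1"
proof -
  have "shannon_entropy I (\<lambda>i. t * l i + (1 - t) * m i) \<le>
     (\<Sum>i\<in>I. t * (- (l i * ln (l i))) + (1 - t) * (- (m i * ln (m i))) + ((1 - t) * l i + t * m i))"
    unfolding shannon_entropy_def using assms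
    by (intro sum_mono neg_mult_ln_convex_comb_le) (auto simp: prob_simplex_def)
  also have "\<dots> = t * shannon_entropy I l + (1 - t) * shannon_entropy I m
      + ((1 - t) * sum l I + t * sum m I)"
    unfolding shannon_entropy_def by (simp add: sum.distrib sum_distrib_left sum_subtractf sum_negf)
  also have "\<dots> = t * shannon_entropy I l + (1 - t) * shannon_entropy I m + 1"
    using assms by (simp add: prob_simplex_def)
  finally show ?thesis .
qed

section \<open>Nodes and the entropic distance to the vertex hull\<close>

definition node_slot :: "nat \<Rightarrow> real set" where
  "node_slot n = {1 / (real n + 2) <..< 1 / (real n + 1)}"

definition node :: "nat \<Rightarrow> nat set \<Rightarrow> real" where
  "node n = (SOME q. inj_on q (Pow {..<n}) \<and> q ` Pow {..<n} \<subseteq> node_slot n)"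

lemma node_slot_subset: "node_slot n \<subseteq> {0..1}"
proof
  fix s assume "s \<in> node_slot n"
  then have "1 / (real n + 2) < s" "s < 1 / (real n + 1)" unfolding node_slot_def by auto
  moreover have "0 < 1 / (real n + 2)" "1 / (real n + 1) \<le> 1" by auto
  ultimately show "s \<in> {0..1}" unfolding atLeastAtMost_iff by linarith
qed

lemma disjoint_node_slots:
  assumes "k \<noteq> n"
  shows "node_slot k \<inter> node_slot n = {}"
proof -
  have "node_slot k \<inter> node_slot n = {}" if "k < n" for k n :: nat
  proof -
    have "1 / (real n + 1) \<le> 1 / (real k + 2)"
      using that by (intro divide_left_mono) auto
    then show ?thesis unfolding node_slot_def by auto
  qed
  then show ?thesis using assms by (metis Int_commute linorder_neqE_nat)
qed

lemma ex_inj_into_node_slot: "\<exists>q. inj_on q (Pow {..<n}) \<and> q ` Pow {..<n} \<subseteq> node_slot n"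
proof -
  have "infinite (node_slot n)" unfolding node_slot_def by (simp add: frac_less2)
  then obtain B where B: "finite B" "card B = card (Pow {..<n})" "B \<subseteq> node_slot n"
    using infinite_arbitrarily_large by blast
  then obtain q where "bij_betw q (Pow {..<n}) B"
    using finite_same_card_bij[of "Pow {..<n}" B] by auto
  then show ?thesis using B unfolding bij_betw_def by auto
qed

lemma inj_on_node: "inj_on (node n) (Pow {..<n})"
  and node_in_node_slot: "A \<subseteq> {..<n} \<Longrightarrow> node n A \<in> node_slot n"
  using someI_ex[OF ex_inj_into_node_slot[of n]] unfolding node_def[symmetric] by auto

lemma node_in_unit_interval: "A \<subseteq> {..<n} \<Longrightarrow> node n A \<in> {0..1}"
  using node_in_node_slot node_slot_subset by blast

definition sign_pattern :: "nat set \<Rightarrow> nat \<Rightarrow> real" where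
  "sign_pattern A i = (if i \<in> A then 1 else -1)"

text \<open>The value at \<open>node n A\<close> of \<open>\<Sum>\<^sub>i<\<^sub>n l\<^sub>i v\<^sub>i + l\<^sub>n\<close>, where the vertex \<open>v\<^sub>i\<close> takes the value
  \<open>sign_pattern A i\<close> there.\<close>

definition hull_value :: "nat \<Rightarrow> (nat \<Rightarrow> real) \<Rightarrow> nat set \<Rightarrow> real" where
  "hull_value n l A = (\<Sum>i<n. l i * sign_pattern A i) + l n"

definition node_dist :: "nat \<Rightarrow> (real \<Rightarrow> real) \<Rightarrow> (nat \<Rightarrow> real) \<Rightarrow> real" where
  "node_dist n x l = Max ((\<lambda>A. \<bar>x (node n A) - hull_value n l A\<bar>) ` Pow {..<n})"

definition entropic_dist :: "real \<Rightarrow> nat \<Rightarrow> (real \<Rightarrow> real) \<Rightarrow> real" where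
  "entropic_dist e n x =
     (INF l\<in>prob_simplex {..n}. e * shannon_entropy {..n} l + node_dist n x l)"

lemma hull_value_convex_comb:
  "hull_value n (\<lambda>i. t * l i + (1 - t) * m i) A = t * hull_value n l A + (1 - t) * hull_value n m A"
proof -
  have "t * (\<Sum>i<n. l i * sign_pattern A i) + (1 - t) * (\<Sum>i<n. m i * sign_pattern A i)
     = (\<Sum>i<n. t * (l i * sign_pattern A i) + (1 - t) * (m i * sign_pattern A i))"
    by (simp add: sum.distrib sum_distrib_left)
  also have "\<dots> = (\<Sum>i<n. (t * l i + (1 - t) * m i) * sign_pattern A i)"
    by (intro sum.cong) (auto simp: algebra_simps)
  finally show ?thesis unfolding hull_value_def by (simp add: algebra_simps)
qed

lemma node_dist_ge: "A \<subseteq> {..<n} \<Longrightarrow> \<bar>x (node n A) - hull_value n l A\<bar> \<le> node_dist n x l"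
  unfolding node_dist_def by (intro Max_ge) auto

lemma node_dist_le:
  "(\<And>A. A \<subseteq> {..<n} \<Longrightarrow> \<bar>x (node n A) - hull_value n l A\<bar> \<le> c) \<Longrightarrow> node_dist n x l \<le> c"
  unfolding node_dist_def by (subst Max_le_iff) auto

lemma node_dist_nonneg: "0 \<le> node_dist n x l"
  using node_dist_ge[of "{}" n x l] by simp

lemma node_dist_lipschitz:
  assumes "x \<in> C01" "y \<in> C01"
  shows "node_dist n x l \<le> node_dist n y l + supnorm (\<lambda>s. x s - y s)"
proof (rule node_dist_le)
  fix A assume A: "A \<subseteq> {..<n}"
  have "\<bar>x (node n A) - y (node n A)\<bar> \<le> supnorm (\<lambda>s. x s - y s)"
    using abs_diff_le_supnorm assms node_in_unit_interval[OF A] by blast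
  moreover have "\<bar>y (node n A) - hull_value n l A\<bar> \<le> node_dist n y l" using node_dist_ge[OF A] .
  ultimately show "\<bar>x (node n A) - hull_value n l A\<bar> \<le> node_dist n y l + supnorm (\<lambda>s. x s - y s)"
    by linarith
qed

lemma node_dist_convex_comb_le:
  assumes "t \<in> {0..1}"
  shows "node_dist n (\<lambda>s. t * x s + (1 - t) * y s) (\<lambda>i. t * l i + (1 - t) * m i)
    \<le> t * node_dist n x l + (1 - t) * node_dist n y m"
proof (rule node_dist_le)
  fix A assume A: "A \<subseteq> {..<n}"
  have "\<bar>t * x (node n A) + (1 - t) * y (node n A) - hull_value n (\<lambda>i. t * l i + (1 - t) * m i) A\<bar>
      = \<bar>t * (x (node n A) - hull_value n l A) + (1 - t) * (y (node n A) - hull_value n m A)\<bar>"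
    unfolding hull_value_convex_comb by (simp add: algebra_simps)
  also have "\<dots> \<le> t * \<bar>x (node n A) - hull_value n l A\<bar> + (1 - t) * \<bar>y (node n A) - hull_value n m A\<bar>"
    using assms by (simp add: abs_mult order_trans[OF abs_triangle_ineq])
  also have "\<dots> \<le> t * node_dist n x l + (1 - t) * node_dist n y m"
    using assms node_dist_ge[OF A] by (intro add_mono mult_left_mono) auto
  finally show "\<bar>t * x (node n A) + (1 - t) * y (node n A)
      - hull_value n (\<lambda>i. t * l i + (1 - t) * m i) A\<bar> \<le> t * node_dist n x l + (1 - t) * node_dist n y m" .
qed

lemma prob_simplex_atMost_nonempty: "prob_simplex {..n::nat} \<noteq> {}"
  using indicator_in_prob_simplex[of "{..n}" n] by auto

lemma entropic_objective_nonneg: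
  "0 \<le> e \<Longrightarrow> l \<in> prob_simplex {..n} \<Longrightarrow> 0 \<le> e * shannon_entropy {..n} l + node_dist n x l"
  using shannon_entropy_nonneg[of "{..n}" l] node_dist_nonneg[of n x l] by simp

lemma bdd_below_entropic_dist:
  "0 \<le> e \<Longrightarrow> bdd_below ((\<lambda>l. e * shannon_entropy {..n} l + node_dist n x l) ` prob_simplex {..n})"
  using entropic_objective_nonneg by (intro bdd_belowI[of _ 0]) blast

lemma entropic_dist_nonneg: "0 \<le> e \<Longrightarrow> 0 \<le> entropic_dist e n x"
  unfolding entropic_dist_def using prob_simplex_atMost_nonempty entropic_objective_nonneg
  by (intro cINF_greatest) blast+

lemma entropic_dist_le:
  "0 \<le> e \<Longrightarrow> l \<in> prob_simplex {..n} \<Longrightarrow> entropic_dist e n x \<le> e * shannon_entropy {..n} l + node_dist n x l"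
  unfolding entropic_dist_def using bdd_below_entropic_dist by (intro cINF_lower) auto

lemma entropic_dist_le_2:
  assumes "0 \<le> e" "x \<in> unit_ball_C01"
  shows "entropic_dist e n x \<le> 2"
proof -
  let ?d = "\<lambda>i. if i = n then 1 else 0 :: real"
  have "node_dist n x ?d \<le> 2"
  proof (rule node_dist_le)
    fix A assume "A \<subseteq> {..<n}"
    then have "\<bar>x (node n A)\<bar> \<le> 1" using abs_le_1_if_unit_ball_C01 assms node_in_unit_interval by blast
    then show "\<bar>x (node n A) - hull_value n ?d A\<bar> \<le> 2" by (simp add: hull_value_def)
  qed
  then show ?thesis
    using entropic_dist_le[OF assms(1) indicator_in_prob_simplex[of "{..n}" n], where x = x]
    by (simp add: shannon_entropy_indicator)
qed

lemma entropic_dist_lipschitz: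
  assumes "x \<in> C01" "y \<in> C01" "0 \<le> e"
  shows "entropic_dist e n x \<le> entropic_dist e n y + supnorm (\<lambda>s. x s - y s)"
proof -
  have "entropic_dist e n x - supnorm (\<lambda>s. x s - y s) \<le> e * shannon_entropy {..n} l + node_dist n y l"
    if "l \<in> prob_simplex {..n}" for l
    using entropic_dist_le[OF assms(3) that, of x] node_dist_lipschitz[OF assms(1,2), of n l] by linarith
  then have "entropic_dist e n x - supnorm (\<lambda>s. x s - y s) \<le> entropic_dist e n y"
    unfolding entropic_dist_def[of e n y] using prob_simplex_atMost_nonempty by (intro cINF_greatest) auto
  then show ?thesis by linarith
qed

lemma entropic_dist_convex_comb_le:
  assumes "0 \<le> e" "t \<in> {0..1}" "l \<in> prob_simplex {..n}" "m \<in> prob_simplex {..n}"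
  shows "entropic_dist e n (\<lambda>s. t * x s + (1 - t) * y s)
    \<le> t * (e * shannon_entropy {..n} l + node_dist n x l)
      + (1 - t) * (e * shannon_entropy {..n} m + node_dist n y m) + e"
proof -
  let ?v = "\<lambda>i. t * l i + (1 - t) * m i"
  have "entropic_dist e n (\<lambda>s. t * x s + (1 - t) * y s)
      \<le> e * shannon_entropy {..n} ?v + node_dist n (\<lambda>s. t * x s + (1 - t) * y s) ?v"
    using assms by (intro entropic_dist_le convex_comb_in_prob_simplex)
  moreover have "e * shannon_entropy {..n} ?v
      \<le> e * (t * shannon_entropy {..n} l + (1 - t) * shannon_entropy {..n} m + 1)"
    using assms by (intro mult_left_mono shannon_entropy_convex_comb_le)
  moreover have "node_dist n (\<lambda>s. t * x s + (1 - t) * y s) ?v \<le> t * node_dist n x l + (1 - t) * node_dist n y m"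
    using assms(2) by (rule node_dist_convex_comb_le)
  ultimately show ?thesis by (simp add: algebra_simps)
qed

lemma ex_near_minimizer_entropic_dist:
  assumes "0 \<le> e" "0 < d"
  obtains l where "l \<in> prob_simplex {..n}"
    "e * shannon_entropy {..n} l + node_dist n x l < entropic_dist e n x + d"
proof -
  have "entropic_dist e n x < entropic_dist e n x + d" using assms(2) by simp
  then show ?thesis
    using that cINF_less_iff[OF prob_simplex_atMost_nonempty bdd_below_entropic_dist[OF assms(1)]]
    unfolding entropic_dist_def by blast
qed

lemma entropic_dist_eps_convex:
  assumes "0 \<le> e" "t \<in> {0..1}"
  shows "entropic_dist e n (\<lambda>s. t * x s + (1 - t) * y s)
    \<le> t * entropic_dist e n x + (1 - t) * entropic_dist e n y + e"
proof (rule field_le_epsilon)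
  fix d :: real assume "0 < d"
  obtain l where l: "l \<in> prob_simplex {..n}"
    "e * shannon_entropy {..n} l + node_dist n x l < entropic_dist e n x + d"
    using ex_near_minimizer_entropic_dist[OF assms(1) \<open>0 < d\<close>] .
  obtain m where m: "m \<in> prob_simplex {..n}"
    "e * shannon_entropy {..n} m + node_dist n y m < entropic_dist e n y + d"
    using ex_near_minimizer_entropic_dist[OF assms(1) \<open>0 < d\<close>] .
  have "entropic_dist e n (\<lambda>s. t * x s + (1 - t) * y s)
      \<le> t * (e * shannon_entropy {..n} l + node_dist n x l)
        + (1 - t) * (e * shannon_entropy {..n} m + node_dist n y m) + e"
    using assms l(1) m(1) by (rule entropic_dist_convex_comb_le)
  also have "\<dots> \<le> t * (entropic_dist e n x + d) + (1 - t) * (entropic_dist e n y + d) + e"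
    using assms l(2) m(2) by (intro add_mono) (auto intro: mult_left_mono)
  finally show "entropic_dist e n (\<lambda>s. t * x s + (1 - t) * y s)
      \<le> t * entropic_dist e n x + (1 - t) * entropic_dist e n y + e + d"
    by (simp add: algebra_simps)
qed

definition eps_convex_witness :: "real \<Rightarrow> (real \<Rightarrow> real) \<Rightarrow> real" where
  "eps_convex_witness e x = (SUP n. entropic_dist e n x)"

lemma entropic_dist_le_witness:
  assumes "0 \<le> e" "x \<in> unit_ball_C01"
  shows "entropic_dist e n x \<le> eps_convex_witness e x"
  unfolding eps_convex_witness_def using entropic_dist_le_2[OF assms]
  by (intro cSUP_upper bdd_aboveI[of _ 2]) auto

lemma eps_convex_witness_nonneg:
  "0 \<le> e \<Longrightarrow> x \<in> unit_ball_C01 \<Longrightarrow> 0 \<le> eps_convex_witness e x"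
  using entropic_dist_le_witness entropic_dist_nonneg order_trans by blast

lemma eps_convex_witness_lipschitz:
  assumes "0 \<le> e"
  shows "lipschitz_C01 unit_ball_C01 1 (eps_convex_witness e)"
proof -
  have le: "eps_convex_witness e x \<le> eps_convex_witness e y + supnorm (\<lambda>s. x s - y s)"
    if "x \<in> unit_ball_C01" "y \<in> unit_ball_C01" for x y
  proof -
    have "entropic_dist e n x \<le> eps_convex_witness e y + supnorm (\<lambda>s. x s - y s)" for n
      using entropic_dist_lipschitz[of x y e n] entropic_dist_le_witness[OF assms that(2), of n]
        that assms unfolding unit_ball_C01_def by auto
    then show ?thesis unfolding eps_convex_witness_def[of e x] by (intro cSUP_least) auto
  qed
  show ?thesis
    unfolding lipschitz_C01_def
  proof (intro ballI)
    fix x y assume "x \<in> unit_ball_C01" "y \<in> unit_ball_C01"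
    then show "\<bar>eps_convex_witness e x - eps_convex_witness e y\<bar> \<le> 1 * supnorm (\<lambda>s. x s - y s)"
      using le[of x y] le[of y x] supnorm_diff_commute[of y x] by (simp add: abs_le_iff)
  qed
qed

lemma eps_convex_witness_eps_convex:
  assumes "0 \<le> e"
  shows "eps_convex_C01 unit_ball_C01 e (eps_convex_witness e)"
  unfolding eps_convex_C01_def
proof (intro ballI)
  fix x y t assume x: "x \<in> unit_ball_C01" and y: "y \<in> unit_ball_C01" and t: "t \<in> {0..1::real}"
  have "entropic_dist e n (\<lambda>s. t * x s + (1 - t) * y s)
      \<le> t * eps_convex_witness e x + (1 - t) * eps_convex_witness e y + e" for n
  proof -
    have "entropic_dist e n (\<lambda>s. t * x s + (1 - t) * y s)
        \<le> t * entropic_dist e n x + (1 - t) * entropic_dist e n y + e"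
      using entropic_dist_eps_convex assms t by blast
    also have "\<dots> \<le> t * eps_convex_witness e x + (1 - t) * eps_convex_witness e y + e"
      using t entropic_dist_le_witness[OF assms x] entropic_dist_le_witness[OF assms y]
      by (intro add_mono mult_left_mono) auto
    finally show ?thesis .
  qed
  then show "eps_convex_witness e (\<lambda>s. t * x s + (1 - t) * y s)
      \<le> t * eps_convex_witness e x + (1 - t) * eps_convex_witness e y + e"
    unfolding eps_convex_witness_def[of e "\<lambda>s. t * x s + (1 - t) * y s"] by (intro cSUP_least) auto
qed

section \<open>Vertices and their barycentre\<close>

definition vertex :: "nat \<Rightarrow> nat \<Rightarrow> (real \<Rightarrow> real) \<Rightarrow> bool" where
  "vertex n i v \<longleftrightarrow> v \<in> unit_ball_C01 \<and> (\<forall>A\<subseteq>{..<n}. v (node n A) = sign_pattern A i) \<and>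
     (\<forall>k A. k \<noteq> n \<longrightarrow> A \<subseteq> {..<k} \<longrightarrow> v (node k A) = 1)"

lemma vertex_exists:
  assumes "i < n"
  shows "\<exists>v. vertex n i v"
proof -
  define P where "P = node n ` Pow {..<n}"
  define N where "N = node n ` {A. A \<subseteq> {..<n} \<and> i \<notin> A}"
  define f where "f = (\<lambda>s. if s \<in> N then -1 else 1 :: real)"
  have "N \<subseteq> P" "P \<subseteq> node_slot n" unfolding N_def P_def using node_in_node_slot by auto
  have closed: "closed P" "closed (- node_slot n)"
    unfolding P_def node_slot_def by (auto intro: finite_imp_closed)
  have cont: "continuous_on (P \<union> - node_slot n) f"
  proof (rule continuous_on_closed_Un[OF closed])
    show "continuous_on P f" unfolding P_def by (intro continuous_on_finite) auto
    show "continuous_on (- node_slot n) f"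
      using \<open>N \<subseteq> P\<close> \<open>P \<subseteq> node_slot n\<close>
      by (intro continuous_on_eq[OF continuous_on_const[of _ 1]]) (auto simp: f_def)
  qed
  have "\<bar>f s\<bar> \<le> 1" for s by (simp add: f_def)
  then obtain v where v: "v \<in> unit_ball_C01" "\<And>s. s \<in> (P \<union> - node_slot n) \<inter> {0..1} \<Longrightarrow> v s = f s"
    using unit_ball_C01_extension[OF closed_Un[OF closed] cont] by blast
  have "v (node n A) = sign_pattern A i" if A: "A \<subseteq> {..<n}" for A
  proof -
    have "node n A \<in> N \<longleftrightarrow> i \<notin> A"
      using inj_on_node[of n] A unfolding N_def inj_on_def by blast
    then show ?thesis using v(2) A node_in_unit_interval unfolding P_def f_def sign_pattern_def by auto
  qed
  moreover have "v (node k A) = 1" if "k \<noteq> n" "A \<subseteq> {..<k}" for k A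
  proof -
    have "node k A \<notin> node_slot n" using node_in_node_slot disjoint_node_slots that by blast
    then show ?thesis
      using v(2) node_in_unit_interval[OF that(2)] \<open>N \<subseteq> P\<close> \<open>P \<subseteq> node_slot n\<close> unfolding f_def by auto
  qed
  ultimately show ?thesis using v(1) unfolding vertex_def by blast
qed

lemma eps_convex_witness_vertex:
  assumes "0 \<le> e" "i < n" "vertex n i v"
  shows "eps_convex_witness e v = 0"
proof -
  have "entropic_dist e k v \<le> 0" for k
  proof -
    define j where "j = (if k = n then i else k)"
    let ?d = "\<lambda>i'. if i' = j then 1 else 0 :: real"
    have j: "j \<in> {..k}" using assms(2) by (simp add: j_def)
    have "node_dist k v ?d \<le> 0"
    proof (rule node_dist_le)
      fix A assume A: "A \<subseteq> {..<k}"
      have "(\<Sum>i'<k. ?d i' * sign_pattern A i') = (\<Sum>i'<k. if i' = j then sign_pattern A i' else 0)"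
        by (rule sum.cong) auto
      then have "hull_value k ?d A = (if k = n then sign_pattern A i else 1)"
        using assms(2) by (simp add: hull_value_def j_def)
      then show "\<bar>v (node k A) - hull_value k ?d A\<bar> \<le> 0"
        using assms(3) A unfolding vertex_def by (cases "k = n") auto
    qed
    then show ?thesis
      using entropic_dist_le[OF assms(1) indicator_in_prob_simplex[OF _ j], where x = v]
      by (simp add: shannon_entropy_indicator)
  qed
  then have "eps_convex_witness e v \<le> 0" unfolding eps_convex_witness_def by (intro cSUP_least) auto
  moreover have "v \<in> unit_ball_C01" using assms(3) unfolding vertex_def by blast
  ultimately show ?thesis using eps_convex_witness_nonneg[OF assms(1)] by force
qed

text \<open>Either \<open>a \<le> exp (-2/e)\<close>, and then the entropy term alone pays \<open>2a\<close>, or \<open>a\<close> is one of the few large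
  coordinates, which cost at most \<open>2c\<close> each.\<close>

lemma entropy_plus_deviation_ge:
  fixes e a c :: real
  assumes "0 < e" "0 \<le> a" "a \<le> 1"
  shows "a + c - (if exp (- (2 / e)) < a then 2 * c else 0) \<le> e * (- (a * ln a)) + \<bar>a - c\<bar>"
proof (cases "exp (- (2 / e)) < a")
  case True
  have "0 \<le> e * (- (a * ln a))" using assms by (intro mult_nonneg_nonneg neg_mult_ln_nonneg) auto
  then show ?thesis using True abs_ge_self[of "a - c"] by simp
next
  case False
  have "2 * a \<le> e * (- (a * ln a))"
  proof (cases "a = 0")
    case False
    then have "0 < a" using assms by simp
    then have "ln a \<le> ln (exp (- (2 / e)))" using \<open>\<not> exp (- (2 / e)) < a\<close> by (subst ln_le_cancel_iff) auto
    then have "ln a \<le> - (2 / e)" by simp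
    then have "2 \<le> e * (- ln a)" using assms(1) by (simp add: field_simps)
    then show ?thesis using mult_left_mono[of 2 "e * (- ln a)" a] assms(2) by (simp add: algebra_simps)
  qed simp
  then show ?thesis using False by (simp add: abs_if)
qed

lemma card_greater_le_inverse:
  fixes l :: "'a \<Rightarrow> real"
  assumes "finite I" "\<And>i. i \<in> I \<Longrightarrow> 0 \<le> l i" "sum l I \<le> 1" "0 < c"
  shows "real (card {i\<in>I. c < l i}) \<le> 1 / c"
proof -
  have "real (card {i\<in>I. c < l i}) * c = (\<Sum>i\<in>{i\<in>I. c < l i}. c)" by simp
  also have "\<dots> \<le> (\<Sum>i\<in>{i\<in>I. c < l i}. l i)" by (intro sum_mono) auto
  also have "\<dots> \<le> sum l I" using assms(1,2) by (intro sum_mono2) auto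
  finally show ?thesis using assms(3,4) by (simp add: field_simps)
qed

lemma node_dist_barycenter_ge:
  assumes b: "\<And>A. A \<subseteq> {..<n} \<Longrightarrow> b (node n A) = (\<Sum>i<n. sign_pattern A i) / real n"
  shows "(\<Sum>i<n. \<bar>l i - 1 / real n\<bar>) + l n \<le> node_dist n b l"
proof -
  define A where "A = {i. i < n \<and> 1 / real n \<le> l i}"
  have A_sub: "A \<subseteq> {..<n}" unfolding A_def by auto
  have "hull_value n l A - b (node n A) = (\<Sum>i<n. (l i - 1 / real n) * sign_pattern A i) + l n"
    unfolding hull_value_def b[OF A_sub]
    by (simp add: sum_divide_distrib sum_subtractf left_diff_distrib)
  also have "(\<Sum>i<n. (l i - 1 / real n) * sign_pattern A i) = (\<Sum>i<n. \<bar>l i - 1 / real n\<bar>)"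
    by (intro sum.cong) (auto simp: sign_pattern_def A_def)
  finally show ?thesis using node_dist_ge[OF A_sub, of b l] by linarith
qed

lemma prob_simplex_sum_large_coords_ge:
  assumes "l \<in> prob_simplex {..n}" "n \<ge> 1" "0 < \<theta>"
  shows "2 - 2 / (\<theta> * real n) \<le> (\<Sum>i<n. l i + 1 / real n - (if \<theta> < l i then 2 / real n else 0)) + l n"
proof -
  define K where "K = {i\<in>{..<n}. \<theta> < l i}"
  have l_ge: "\<And>i. i \<le> n \<Longrightarrow> 0 \<le> l i" and l_sum: "sum l {..n} = 1"
    using assms(1) unfolding prob_simplex_def by auto
  have "sum l {..<n} \<le> sum l {..n}" using l_ge by (intro sum_mono2) auto
  then have "real (card K) \<le> 1 / \<theta>"
    unfolding K_def using l_ge l_sum assms(3) by (intro card_greater_le_inverse) auto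
  then have "2 * real (card K) / real n \<le> 2 * (1 / \<theta>) / real n"
    by (intro divide_right_mono mult_left_mono) auto
  then have "2 - 2 / (\<theta> * real n) \<le> 2 - 2 * real (card K) / real n" by simp
  also have "\<dots> = (\<Sum>i<n. l i + 1 / real n - (if \<theta> < l i then 2 / real n else 0)) + l n"
  proof -
    have "(\<Sum>i<n. if \<theta> < l i then 2 / real n else 0) = 2 * real (card K) / real n"
      unfolding K_def by (simp flip: sum.inter_filter)
    moreover have "(\<Sum>i<n. l i) + l n = 1" using l_sum by (simp flip: lessThan_Suc_atMost)
    moreover have "(\<Sum>i<n. 1 / real n) = 1" using assms(2) by simp
    ultimately show ?thesis by (simp add: sum_subtractf sum.distrib)
  qed
  finally show ?thesis .
qed

lemma entropic_dist_barycenter_ge: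
  assumes "0 < e" "n \<ge> 1"
    and b: "\<And>A. A \<subseteq> {..<n} \<Longrightarrow> b (node n A) = (\<Sum>i<n. sign_pattern A i) / real n"
  shows "2 - 2 * exp (2 / e) / real n \<le> entropic_dist e n b"
  unfolding entropic_dist_def
proof (rule cINF_greatest[OF prob_simplex_atMost_nonempty])
  fix l assume l: "l \<in> prob_simplex {..n}"
  define c where "c = 1 / real n"
  have l_ge: "\<And>i. i \<le> n \<Longrightarrow> 0 \<le> l i" using l unfolding prob_simplex_def by auto
  have l_le: "\<And>i. i \<le> n \<Longrightarrow> l i \<le> 1" using prob_simplex_le_1[OF _ l] by simp
  have "2 - 2 * exp (2 / e) / real n = 2 - 2 / (exp (- (2 / e)) * real n)"
    by (simp add: exp_minus field_simps)
  also have "\<dots> \<le> (\<Sum>i<n. l i + c - (if exp (- (2 / e)) < l i then 2 * c else 0)) + l n"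
    using prob_simplex_sum_large_coords_ge[OF l assms(2), of "exp (- (2 / e))"] unfolding c_def by (simp cong: if_cong)
  also have "\<dots> \<le> (\<Sum>i<n. e * (- (l i * ln (l i))) + \<bar>l i - c\<bar>) + l n"
    using entropy_plus_deviation_ge[OF assms(1)] l_ge l_le by (intro add_right_mono sum_mono) auto
  also have "\<dots> = e * (\<Sum>i<n. - (l i * ln (l i))) + ((\<Sum>i<n. \<bar>l i - c\<bar>) + l n)"
    by (simp only: sum.distrib sum_distrib_left add.assoc)
  also have "\<dots> \<le> e * shannon_entropy {..n} l + node_dist n b l"
  proof (rule add_mono)
    have "(\<Sum>i<n. - (l i * ln (l i))) \<le> shannon_entropy {..n} l"
      unfolding shannon_entropy_def using neg_mult_ln_nonneg l_ge l_le by (intro sum_mono2) auto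
    then show "e * (\<Sum>i<n. - (l i * ln (l i))) \<le> e * shannon_entropy {..n} l"
      using assms(1) by (simp add: mult_left_mono)
    show "(\<Sum>i<n. \<bar>l i - c\<bar>) + l n \<le> node_dist n b l"
      unfolding c_def using b by (rule node_dist_barycenter_ge)
  qed
  finally show "2 - 2 * exp (2 / e) / real n \<le> e * shannon_entropy {..n} l + node_dist n b l" .
qed

section \<open>No convex function is uniformly close\<close>

lemma large_deviation_at_barycenter_or_vertex:
  fixes F g :: "'a \<Rightarrow> real"
  assumes "n \<ge> 1" "\<And>i. i < n \<Longrightarrow> F (V i) = 0" "2 * c \<le> F b" "g b \<le> (\<Sum>i<n. g (V i)) / real n"
  shows "c \<le> \<bar>F b - g b\<bar> \<or> (\<exists>i<n. c \<le> \<bar>F (V i) - g (V i)\<bar>)"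
proof (rule disjCI)
  assume "\<not> (\<exists>i<n. c \<le> \<bar>F (V i) - g (V i)\<bar>)"
  then have "g (V i) < c" if "i < n" for i using assms(2) that by force
  then have "(\<Sum>i<n. g (V i)) < (\<Sum>i<n. c)" using assms(1) by (intro sum_strict_mono) (auto simp: lessThan_empty_iff)
  then have "(\<Sum>i<n. g (V i)) / real n < c" using assms(1) by (simp add: divide_less_eq mult.commute)
  then show "c \<le> \<bar>F b - g b\<bar>" using assms(3,4) by linarith
qed

lemma eps_convex_witness_deviation_ge:
  assumes "0 < e" "n \<ge> 1" "convex_C01 unit_ball_C01 g"
  shows "ereal (1 - exp (2 / e) / real n)
    \<le> (SUP x\<in>unit_ball_C01. ereal \<bar>eps_convex_witness e x - g x\<bar>)"
proof -
  let ?F = "eps_convex_witness e"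
  obtain V where V: "\<And>i. i < n \<Longrightarrow> vertex n i (V i)"
    using bchoice[of "{..<n}" "vertex n"] vertex_exists by auto
  then have V_ball: "\<And>i. i < n \<Longrightarrow> V i \<in> unit_ball_C01" unfolding vertex_def by blast
  define b where "b = (\<lambda>s. (\<Sum>i<n. V i s) / real n)"
  have "b \<in> unit_ball_C01 \<and> g b \<le> (\<Sum>i<n. g (V i)) / real n"
    unfolding b_def by (rule convex_C01_mean_le[OF assms(3) convex_comb_in_unit_ball_C01 assms(2) V_ball])
  then have b: "b \<in> unit_ball_C01" "g b \<le> (\<Sum>i<n. g (V i)) / real n" by blast+
  have "b (node n A) = (\<Sum>i<n. sign_pattern A i) / real n" if A: "A \<subseteq> {..<n}" for A
  proof -
    have "V i (node n A) = sign_pattern A i" if "i < n" for i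
      using V[OF that] A unfolding vertex_def by blast
    then show ?thesis unfolding b_def by (metis (no_types, lifting) lessThan_iff sum.cong)
  qed
  then have "2 - 2 * exp (2 / e) / real n \<le> ?F b"
    using entropic_dist_barycenter_ge[OF assms(1,2)] entropic_dist_le_witness[OF _ b(1)] assms(1)
    by (meson less_imp_le order_trans)
  then have "2 * (1 - exp (2 / e) / real n) \<le> ?F b" by (simp add: algebra_simps)
  moreover have "?F (V i) = 0" if "i < n" for i
    using eps_convex_witness_vertex[OF _ that V[OF that]] assms(1) by simp
  ultimately have "\<exists>x\<in>unit_ball_C01. 1 - exp (2 / e) / real n \<le> \<bar>?F x - g x\<bar>"
    using large_deviation_at_barycenter_or_vertex[OF assms(2), of ?F V _ b g] b V_ball by blast
  then obtain x where "x \<in> unit_ball_C01" "1 - exp (2 / e) / real n \<le> \<bar>?F x - g x\<bar>" ..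
  then show ?thesis by (intro SUP_upper2[of x]) auto
qed

theorem corollary7p11:
  fixes \<epsilon> :: real
  assumes "\<epsilon> > 0"
  shows "\<exists>f :: (real \<Rightarrow> real) \<Rightarrow> real.
           (\<forall>x\<in>unit_ball_C01. f x \<ge> 0) \<and>
           lipschitz_C01 unit_ball_C01 1 f \<and>
           eps_convex_C01 unit_ball_C01 \<epsilon> f \<and>
           (\<forall>g :: (real \<Rightarrow> real) \<Rightarrow> real. convex_C01 unit_ball_C01 g \<longrightarrow>
              (SUP x\<in>unit_ball_C01. ereal \<bar>f x - g x\<bar>) \<ge> 1)"
proof -
  have "1 \<le> (SUP x\<in>unit_ball_C01. ereal \<bar>eps_convex_witness \<epsilon> x - g x\<bar>)"
    if "convex_C01 unit_ball_C01 g" for g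
  proof (rule LIMSEQ_le_const2)
    have "(\<lambda>n. ereal (1 - exp (2 / \<epsilon>) / real n)) \<longlonglongrightarrow> ereal (1 - 0)"
      by (intro tendsto_intros lim_const_over_n)
    then show "(\<lambda>n. ereal (1 - exp (2 / \<epsilon>) / real n)) \<longlonglongrightarrow> 1" by (simp add: one_ereal_def)
    show "\<exists>N. \<forall>n\<ge>N. ereal (1 - exp (2 / \<epsilon>) / real n)
        \<le> (SUP x\<in>unit_ball_C01. ereal \<bar>eps_convex_witness \<epsilon> x - g x\<bar>)"
      using eps_convex_witness_deviation_ge[OF assms _ that] by blast
  qed
  moreover have "0 \<le> \<epsilon>" using assms by simp
  ultimately show ?thesis
    using eps_convex_witness_nonneg eps_convex_witness_lipschitz eps_convex_witness_eps_convex by blast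
qed

end
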